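(* If an affine bijection $\sigma:\mathcal{G}_N\to\mathcal{G}_N$ satisfies $\sigma(A_0)=A_0$, then $\sigma(\mathcal{I}_k)=\mathcal{I}_k$ for all $k=1,\ldots,\lfloor N/2\rfloor$.
   Context: $\mathcal{G}_N$ is the set of real symmetric positive semi-definite $N\times N$ matrices with unit diagonal. For $\mathcal K\subseteq\{1,\ldots,N\}$, $A_{\mathcal K}=\mathbf{s}\mathbf{s}^\top$ where $s_\mu=-1$ for $\mu\in\mathcal K$ and $s_\mu=+1$ otherwise; $A_0$ is the all-ones matrix; $\mathcal{I}_k=\{A_{\mathcal K}:|\mathcal K|=k\}$. *)

theory Defs
  imports "HOL-Analysis.Analysis"
begin

text \<open>Real symmetric positive semi-definite matrices, indexed by a finite type 'n
  (so N = CARD('n)).\<close>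
definition psd_matrix :: "real^'n^'n \<Rightarrow> bool" where
  "psd_matrix A \<longleftrightarrow> transpose A = A \<and> (\<forall>x::real^'n. 0 \<le> x \<bullet> (A *v x))"

definition elliptope :: "(real^'n^'n) set" where
  "elliptope = {A. psd_matrix A \<and> (\<forall>i. A $ i $ i = 1)}"

definition sign_vec :: "'n set \<Rightarrow> real^'n" where
  "sign_vec K = (\<chi> i. if i \<in> K then -1 else 1)"

definition cut_matrix :: "'n set \<Rightarrow> real^'n^'n" where
  "cut_matrix K = (\<chi> i j. sign_vec K $ i * sign_vec K $ j)"

definition ones_matrix :: "real^'n^'n" where
  "ones_matrix = (\<chi> i j. 1)"

definition cut_class :: "nat \<Rightarrow> (real^'n^'n) set" where
  "cut_class k = {cut_matrix K | K. card K = k}"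

definition affine_on :: "('a::real_vector) set \<Rightarrow> ('a \<Rightarrow> 'b::real_vector) \<Rightarrow> bool" where
  "affine_on S f \<longleftrightarrow> (\<forall>x\<in>S. \<forall>y\<in>S. \<forall>t::real. 0 \<le> t \<and> t \<le> 1 \<longrightarrow>
      f ((1 - t) *\<^sub>R x + t *\<^sub>R y) = (1 - t) *\<^sub>R f x + t *\<^sub>R f y)"

end

theory Submission
  imports Defs
begin

(* Call X a vertex of the elliptope if the affine functionals maximised at X separate its
   points. The cut matrices are exactly the vertices: at A_K the functionals s_i s_j Z_ij do
   the job, while at any other point some entry satisfies |X_pq| < 1, and a congruence curve
   M_t X M_t^T through X shows that every functional maximised at X is stationary in a fixed
   direction D, so none separates the identity from the identity plus a small multiple of D.
   Affine bijections preserve vertices and hence permute the cut matrices.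

   If moreover A_0 is fixed, the bijection preserves the relation "the centroid of A_0, A_K,
   A_L lies strictly between a further cut matrix and a point of the elliptope". For cut
   matrices this holds exactly when K and L are distinct non-crossing cuts (the further cut is
   their symmetric difference; for crossing cuts a vector orthogonal to the sign vectors of
   the empty cut, K and L makes the candidate point indefinite). Counting non-crossing
   partners, A_K is related to 2^(N-k) + 2^k - 4 cut matrices, k = |K|, and this number
   determines k up to k <-> N - k. *)

section \<open>The elliptope and its cut matrices\<close>

lemma quadratic_form_eq_double_sum:
  "(x::real^'n) \<bullet> (A *v x) = (\<Sum>i\<in>UNIV. \<Sum>j\<in>UNIV. x$i * A$i$j * x$j)"
  by (simp add: inner_vec_def matrix_vector_mult_def sum_distrib_left mult.assoc)

lemma quadratic_form_supported:
  fixes x :: "real^'n"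
  assumes "\<And>k. k \<notin> S \<Longrightarrow> x$k = 0"
  shows "x \<bullet> (A *v x) = (\<Sum>i\<in>S. \<Sum>j\<in>S. x$i * A$i$j * x$j)"
proof -
  have "x \<bullet> (A *v x) = (\<Sum>i\<in>S. \<Sum>j\<in>UNIV. x$i * A$i$j * x$j)"
    unfolding quadratic_form_eq_double_sum by (rule sum.mono_neutral_right) (auto simp: assms)
  also have "\<dots> = (\<Sum>i\<in>S. \<Sum>j\<in>S. x$i * A$i$j * x$j)"
    by (rule sum.cong[OF refl], rule sum.mono_neutral_right) (auto simp: assms)
  finally show ?thesis .
qed

lemma inner_supported:
  fixes x s :: "real^'n"
  assumes "\<And>k. k \<notin> S \<Longrightarrow> x$k = 0"
  shows "s \<bullet> x = (\<Sum>i\<in>S. s$i * x$i)"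
  unfolding inner_vec_def inner_real_def by (rule sum.mono_neutral_right) (auto simp: assms)

lemma quadratic_form_add: "(x::real^'n) \<bullet> ((A + B) *v x) = x \<bullet> (A *v x) + x \<bullet> (B *v x)"
  by (simp add: matrix_vector_mult_add_rdistrib inner_add_right)

lemma quadratic_form_diff: "(x::real^'n) \<bullet> ((A - B) *v x) = x \<bullet> (A *v x) - x \<bullet> (B *v x)"
  by (simp add: matrix_vector_mult_diff_rdistrib inner_diff_right)

lemma quadratic_form_scaleR: "(x::real^'n) \<bullet> ((c *\<^sub>R A) *v x) = c * (x \<bullet> (A *v x))"
  by (simp flip: scaleR_matrix_vector_assoc)

lemma sign_vec_cases: "sign_vec K $ i = 1 \<or> sign_vec K $ i = -1"
  by (simp add: sign_vec_def)

lemma sign_vec_square [simp]: "sign_vec K $ i * sign_vec K $ i = 1"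
  by (simp add: sign_vec_def)

lemma cut_matrix_entry [simp]: "cut_matrix K $ i $ j = sign_vec K $ i * sign_vec K $ j"
  by (simp add: cut_matrix_def)

lemma cut_matrix_quadratic_form: "x \<bullet> (cut_matrix K *v x) = (sign_vec K \<bullet> x)\<^sup>2"
  unfolding quadratic_form_eq_double_sum
  by (simp add: inner_vec_def power2_eq_square sum_product ac_simps)

lemma ones_matrix_eq_cut_matrix_empty: "ones_matrix = cut_matrix {}"
  by (simp add: vec_eq_iff ones_matrix_def sign_vec_def)

lemma cut_matrix_Compl: "cut_matrix (- K) = cut_matrix K"
  by (simp add: vec_eq_iff sign_vec_def)

lemma cut_matrix_eq_iff:
  fixes K L :: "'n::finite set"
  shows "cut_matrix K = cut_matrix L \<longleftrightarrow> K = L \<or> K = - L"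
proof
  assume "K = L \<or> K = - L"
  then show "cut_matrix K = cut_matrix L" by (metis cut_matrix_Compl)
next
  assume eq: "cut_matrix K = cut_matrix L"
  obtain i0 :: 'n where True by simp
  have "(j \<in> L \<longleftrightarrow> j \<in> K) \<longleftrightarrow> (i0 \<in> L \<longleftrightarrow> i0 \<in> K)" for j
  proof -
    have "sign_vec K $ i0 * sign_vec K $ j = sign_vec L $ i0 * sign_vec L $ j"
      using eq by (metis cut_matrix_entry)
    then show ?thesis by (auto simp: sign_vec_def split: if_splits)
  qed
  then show "K = L \<or> K = - L" by blast
qed

lemma elliptopeI:
  assumes "transpose A = A" and "\<And>i. A $ i $ i = 1" and "\<And>x. 0 \<le> x \<bullet> (A *v x)"
  shows "A \<in> elliptope"
  using assms by (simp add: elliptope_def psd_matrix_def)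

lemma elliptope_symmetric: "X \<in> elliptope \<Longrightarrow> X$j$i = X$i$j"
  by (simp add: elliptope_def psd_matrix_def) (metis transpose_def vec_lambda_beta)

lemma elliptope_diag: "X \<in> elliptope \<Longrightarrow> X$i$i = 1"
  by (simp add: elliptope_def)

lemma elliptope_psd: "X \<in> elliptope \<Longrightarrow> 0 \<le> x \<bullet> (X *v x)"
  by (simp add: elliptope_def psd_matrix_def)

lemma cut_matrix_in_elliptope: "cut_matrix K \<in> elliptope"
  by (rule elliptopeI) (simp_all add: cut_matrix_quadratic_form vec_eq_iff transpose_def mult.commute)

lemma ones_matrix_in_elliptope: "ones_matrix \<in> elliptope"
  by (simp add: ones_matrix_eq_cut_matrix_empty cut_matrix_in_elliptope)

lemma mat_1_in_elliptope: "(mat 1 :: real^'n^'n) \<in> elliptope"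
proof (rule elliptopeI)
  show "transpose (mat 1) = (mat 1 :: real^'n^'n)" by (rule transpose_mat)
  show "(mat 1 :: real^'n^'n) $ i $ i = 1" for i by (simp add: mat_def)
qed simp

lemma convex_elliptope: "convex (elliptope :: (real^'n^'n) set)"
  unfolding convex_alt
proof (intro ballI allI impI)
  fix A B :: "real^'n^'n" and t :: real
  assume A: "A \<in> elliptope" and B: "B \<in> elliptope" and t: "0 \<le> t \<and> t \<le> 1"
  show "(1 - t) *\<^sub>R A + t *\<^sub>R B \<in> elliptope"
  proof (rule elliptopeI)
    show "transpose ((1 - t) *\<^sub>R A + t *\<^sub>R B) = (1 - t) *\<^sub>R A + t *\<^sub>R B"
      using A B by (simp add: vec_eq_iff transpose_def elliptope_symmetric)
    show "((1 - t) *\<^sub>R A + t *\<^sub>R B) $ i $ i = 1" for i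
      using A B by (simp add: elliptope_diag algebra_simps)
    show "0 \<le> x \<bullet> (((1 - t) *\<^sub>R A + t *\<^sub>R B) *v x)" for x
      using A B t by (simp add: quadratic_form_add quadratic_form_scaleR elliptope_psd)
  qed
qed

lemma elliptope_entry_bound:
  fixes X :: "real^'n^'n"
  assumes X: "X \<in> elliptope"
  shows "\<bar>X$i$j\<bar> \<le> 1"
proof (cases "i = j")
  case True
  then show ?thesis using elliptope_diag[OF X] by simp
next
  case False
  have "0 \<le> 2 + 2 * e * X$i$j" if "e = 1 \<or> e = -1" for e :: real
  proof -
    define x :: "real^'n" where "x = (\<chi> k. if k = i then 1 else if k = j then e else 0)"
    have "x \<bullet> (X *v x) = (\<Sum>a\<in>{i,j}. \<Sum>b\<in>{i,j}. x$a * X$a$b * x$b)"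
      by (rule quadratic_form_supported) (auto simp: x_def)
    also have "\<dots> = 2 + 2 * e * X$i$j"
      using False that elliptope_diag[OF X] elliptope_symmetric[OF X, of i j] by (auto simp: x_def)
    finally show ?thesis using elliptope_psd[OF X, of x] by simp
  qed
  from this[of 1] this[of "-1"] show ?thesis by auto
qed

section \<open>Affine maps on convex sets\<close>

lemma affine_onD:
  assumes "affine_on S f" "x \<in> S" "y \<in> S" "0 \<le> t" "t \<le> 1"
  shows "f ((1 - t) *\<^sub>R x + t *\<^sub>R y) = (1 - t) *\<^sub>R f x + t *\<^sub>R f y"
  using assms unfolding affine_on_def by blast

lemma affine_on_inv_into:
  assumes bij: "bij_betw f S S" and f: "affine_on S f" and S: "convex S"
  shows "affine_on S (inv_into S f)"
  unfolding affine_on_def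
proof (intro ballI allI impI)
  fix x y and t :: real
  assume x: "x \<in> S" and y: "y \<in> S" and t: "0 \<le> t \<and> t \<le> 1"
  let ?x = "inv_into S f x" and ?y = "inv_into S f y"
  have x': "?x \<in> S" "f ?x = x" and y': "?y \<in> S" "f ?y = y"
    using x y bij by (auto simp: bij_betw_def inv_into_into f_inv_into_f)
  have "(1 - t) *\<^sub>R ?x + t *\<^sub>R ?y \<in> S"
    using S x'(1) y'(1) t unfolding convex_alt by blast
  moreover have "f ((1 - t) *\<^sub>R ?x + t *\<^sub>R ?y) = (1 - t) *\<^sub>R x + t *\<^sub>R y"
    using affine_onD[OF f x'(1) y'(1)] t by (simp add: x'(2) y'(2))
  ultimately show "inv_into S f ((1 - t) *\<^sub>R x + t *\<^sub>R y) = (1 - t) *\<^sub>R ?x + t *\<^sub>R ?y"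
    using bij by (metis bij_betw_def inv_into_f_f)
qed

lemma affine_on_comp:
  assumes "affine_on S f" "affine_on S g" "g ` S \<subseteq> S"
  shows "affine_on S (f \<circ> g)"
  using assms unfolding affine_on_def by (simp add: image_subset_iff)

lemma affine_on_real_sum:
  fixes g :: "'a::real_vector \<Rightarrow> real"
  assumes g: "affine_on S g" and S: "convex S" and I: "finite I" "I \<noteq> {}"
    and a: "sum a I = 1" "\<And>i. i \<in> I \<Longrightarrow> a i \<ge> 0" and y: "\<And>i. i \<in> I \<Longrightarrow> y i \<in> S"
  shows "g (\<Sum>i\<in>I. a i *\<^sub>R y i) = (\<Sum>i\<in>I. a i * g (y i))"
proof -
  have lin: "g (u *\<^sub>R x + v *\<^sub>R y) = u * g x + v * g y"
    if "x \<in> S" "y \<in> S" "0 \<le> u" "0 \<le> v" "u + v = 1" for x y u v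
  proof -
    from that have "u = 1 - v" by simp
    with affine_onD[OF g that(1,2), of v] that show ?thesis by simp
  qed
  have "convex_on S g" "convex_on S (\<lambda>x. - g x)"
    using S lin by (auto simp: convex_on_def)
  from this[THEN convex_on_sum[where a = a and y = y, OF I _ a y]] show ?thesis
    by (simp add: sum_negf)
qed

lemma affine_on_centroid3:
  assumes f: "affine_on S f" and S: "convex S" and "x \<in> S" "y \<in> S" "z \<in> S"
  shows "f ((1/3) *\<^sub>R x + (1/3) *\<^sub>R y + (1/3) *\<^sub>R z) = (1/3) *\<^sub>R f x + (1/3) *\<^sub>R f y + (1/3) *\<^sub>R f z"
proof -
  let ?m = "(1 - 1/2) *\<^sub>R x + (1/2) *\<^sub>R y"
  have m: "?m \<in> S"
    by (rule convexD_alt) (use assms in auto)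
  have "(1/3) *\<^sub>R x + (1/3) *\<^sub>R y + (1/3) *\<^sub>R z = (1 - 1/3) *\<^sub>R ?m + (1/3) *\<^sub>R z"
    by (simp add: algebra_simps)
  then show ?thesis
    using affine_onD[OF f m \<open>z \<in> S\<close>, of "1/3"] affine_onD[OF f \<open>x \<in> S\<close> \<open>y \<in> S\<close>, of "1/2"]
    by (simp add: algebra_simps)
qed

section \<open>Affine functionals on the elliptope\<close>

definition sym_unit :: "'n \<Rightarrow> 'n \<Rightarrow> real^'n^'n" where
  "sym_unit i j = (\<chi> k l. if i \<noteq> j \<and> ((k = i \<and> l = j) \<or> (k = j \<and> l = i)) then 1 else 0)"

lemma sym_unit_quadratic_form:
  "(x::real^'n) \<bullet> (sym_unit i j *v x) = (if i = j then 0 else 2 * x$i * x$j)"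
proof (cases "i = j")
  case True
  then have "sym_unit i j = 0" by (simp add: sym_unit_def vec_eq_iff)
  then show ?thesis using True by simp
next
  case False
  have "x \<bullet> (sym_unit i j *v x)
      = (\<Sum>k\<in>UNIV. \<Sum>l\<in>UNIV. (if l = j then if k = i then x$i * x$j else 0 else 0)
                              + (if l = i then if k = j then x$j * x$i else 0 else 0))"
    unfolding quadratic_form_eq_double_sum
    by (intro sum.cong refl) (use False in \<open>auto simp: sym_unit_def\<close>)
  then show ?thesis using False by (simp add: sum.distrib)
qed

lemma two_abs_mult_le: "2 * \<bar>a * b\<bar> \<le> a * a + b * (b::real)"
proof -
  have "0 \<le> (\<bar>a\<bar> - \<bar>b\<bar>)\<^sup>2" by simp
  then show ?thesis by (simp add: power2_eq_square algebra_simps abs_mult)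
qed

lemma mat_1_plus_sym_unit_in_elliptope:
  fixes i j :: "'n::finite"
  assumes c: "\<bar>c\<bar> \<le> 1"
  shows "mat 1 + c *\<^sub>R sym_unit i j \<in> elliptope"
proof (rule elliptopeI)
  show "transpose (mat 1 + c *\<^sub>R sym_unit i j) = mat 1 + c *\<^sub>R sym_unit i j"
    by (auto simp: vec_eq_iff transpose_def mat_def sym_unit_def)
  show "(mat 1 + c *\<^sub>R sym_unit i j) $ k $ k = 1" for k
    by (auto simp: mat_def sym_unit_def)
  show "0 \<le> x \<bullet> ((mat 1 + c *\<^sub>R sym_unit i j) *v x)" for x :: "real^'n"
  proof (cases "i = j")
    case True
    then show ?thesis by (simp add: quadratic_form_add quadratic_form_scaleR sym_unit_quadratic_form)
  next
    case False
    have "x$i * x$i + x$j * x$j = (\<Sum>k\<in>{i,j}. x$k * x$k)"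
      using False by simp
    also have "\<dots> \<le> (\<Sum>k\<in>UNIV. x$k * x$k)"
      by (rule sum_mono2) auto
    finally have "x$i * x$i + x$j * x$j \<le> x \<bullet> x"
      by (simp add: inner_vec_def)
    moreover have "\<bar>c * (2 * x$i * x$j)\<bar> \<le> 2 * \<bar>x$i * x$j\<bar>"
      using c by (simp add: abs_mult mult_left_le_one_le)
    moreover note two_abs_mult_le[of "x$i" "x$j"]
    ultimately show ?thesis
      using False by (simp add: quadratic_form_add quadratic_form_scaleR sym_unit_quadratic_form)
  qed
qed

lemma sum_pairs_sym_unit:
  fixes f :: "'n::finite \<times> 'n \<Rightarrow> real"
  shows "(\<Sum>p\<in>UNIV. f p * sym_unit (fst p) (snd p) $ k $ l) = (if k = l then 0 else f (k,l) + f (l,k))"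
proof (cases "k = l")
  case True
  then show ?thesis by (simp add: sym_unit_def, intro sum.neutral) auto
next
  case False
  have "(\<Sum>p\<in>UNIV. f p * sym_unit (fst p) (snd p) $ k $ l)
      = (\<Sum>p\<in>UNIV. (if p = (k,l) then f p else 0) + (if p = (l,k) then f p else 0))"
    by (rule sum.cong) (use False in \<open>auto simp: sym_unit_def\<close>)
  then show ?thesis using False by (simp add: sum.distrib)
qed

lemma affine_on_elliptope_sym_unit_line:
  fixes g :: "real^'n^'n \<Rightarrow> real"
  assumes g: "affine_on elliptope g" and t: "\<bar>t\<bar> \<le> 1"
  shows "g (mat 1 + t *\<^sub>R sym_unit i j) = g (mat 1) + t * (g (mat 1 + sym_unit i j) - g (mat 1))"
proof -
  let ?P = "mat 1 + sym_unit i j" and ?M = "mat 1 + (-1) *\<^sub>R sym_unit i j"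
  have P: "?P \<in> elliptope" using mat_1_plus_sym_unit_in_elliptope[of 1 i j] by simp
  have M: "?M \<in> elliptope" using mat_1_plus_sym_unit_in_elliptope[of "-1" i j] by simp
  have "mat 1 + s *\<^sub>R sym_unit i j = (1 - (1 + s)/2) *\<^sub>R ?M + ((1 + s)/2) *\<^sub>R ?P" for s
    by (simp add: vec_eq_iff algebra_simps add_divide_distrib)
  then have "g (mat 1 + s *\<^sub>R sym_unit i j) = (1 - (1 + s)/2) * g ?M + ((1 + s)/2) * g ?P"
    if "\<bar>s\<bar> \<le> 1" for s
    using affine_onD[OF g M P, of "(1 + s)/2"] that by simp
  note on_line = this
  define e where "e = g ?P - g ?M"
  from on_line[of t] on_line[of 0] t
  have "g (mat 1 + t *\<^sub>R sym_unit i j) = g ?M + (1 + t)/2 * e" "g (mat 1) = g ?M + e/2"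
    by (simp_all add: e_def field_simps)
  moreover have "g ?P = g ?M + e" by (simp add: e_def)
  ultimately show ?thesis by (simp only:) (simp add: field_simps)
qed

lemma mean_sym_unit_perturbations:
  fixes Z :: "real^'n^'n"
  assumes Z: "Z \<in> elliptope" and m: "m = real (card (UNIV :: ('n \<times> 'n) set))"
  shows "(1 - 1/m) *\<^sub>R mat 1 + (1/m) *\<^sub>R Z
       = (\<Sum>p\<in>UNIV. (1/m) *\<^sub>R (mat 1 + (Z $ fst p $ snd p / 2) *\<^sub>R sym_unit (fst p) (snd p)))"
proof -
  have "m > 0" using m by (simp add: card_gt_0_iff)
  have "((1 - 1/m) *\<^sub>R mat 1 + (1/m) *\<^sub>R Z) $ k $ l
      = (\<Sum>p\<in>UNIV. (1/m) *\<^sub>R (mat 1 + (Z $ fst p $ snd p / 2) *\<^sub>R sym_unit (fst p) (snd p))) $ k $ l"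
    for k l
  proof -
    have "(\<Sum>p\<in>UNIV. (1/m) *\<^sub>R (mat 1 + (Z $ fst p $ snd p / 2) *\<^sub>R sym_unit (fst p) (snd p))) $ k $ l
        = (\<Sum>p\<in>(UNIV::('n\<times>'n) set). (1/m) * (if k = l then 1 else 0))
          + (1/m) * (\<Sum>p\<in>UNIV. (Z $ fst p $ snd p / 2) * sym_unit (fst p) (snd p) $ k $ l)"
      by (simp add: sum_component sum.distrib sum_distrib_left mat_def algebra_simps del: sum_constant)
    also have "\<dots> = (if k = l then 1 else 0) + (1/m) * (if k = l then 0 else Z$k$l/2 + Z$l$k/2)"
      using \<open>m > 0\<close> by (simp only: sum_pairs_sym_unit sum_constant m[symmetric]) simp
    also have "\<dots> = ((1 - 1/m) *\<^sub>R mat 1 + (1/m) *\<^sub>R Z) $ k $ l"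
      using elliptope_symmetric[OF Z, of k l] elliptope_diag[OF Z, of k] \<open>m > 0\<close>
      by (auto simp: mat_def field_simps)
    finally show ?thesis by simp
  qed
  then show ?thesis by (simp add: vec_eq_iff)
qed

lemma affine_on_elliptope_linear_repr:
  fixes g :: "real^'n^'n \<Rightarrow> real"
  assumes g: "affine_on elliptope g"
  shows "\<exists>a B. \<forall>Z\<in>elliptope. g Z = a + (\<Sum>i\<in>UNIV. \<Sum>j\<in>UNIV. B i j * Z$i$j)"
proof -
  define c where "c i j = (g (mat 1 + sym_unit i j) - g (mat 1)) / 2" for i j
  define m :: real where "m = real (card (UNIV :: ('n \<times> 'n) set))"
  have "0 < card (UNIV :: ('n \<times> 'n) set)" by (rule finite_UNIV_card_ge_0) simp
  then have "m \<ge> 1" unfolding m_def by linarith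
  have "g Z = g (mat 1) + (\<Sum>i\<in>UNIV. \<Sum>j\<in>UNIV. c i j * Z$i$j)" if Z: "Z \<in> elliptope" for Z
  proof -
    define y where "y p = mat 1 + (Z $ fst p $ snd p / 2) *\<^sub>R sym_unit (fst p) (snd p)" for p
    have half_bound: "\<bar>Z $ fst p $ snd p / 2\<bar> \<le> 1" for p
      using elliptope_entry_bound[OF Z, of "fst p" "snd p"] by simp
    have "(1 - 1/m) * g (mat 1) + (1/m) * g Z = g ((1 - 1/m) *\<^sub>R mat 1 + (1/m) *\<^sub>R Z)"
      using affine_onD[OF g mat_1_in_elliptope Z, of "1/m"] \<open>m \<ge> 1\<close> by simp
    also have "\<dots> = g (\<Sum>p\<in>UNIV. (1/m) *\<^sub>R y p)"
      unfolding y_def by (rule arg_cong[where f = g], rule mean_sym_unit_perturbations[OF Z m_def])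
    also have "\<dots> = (\<Sum>p\<in>UNIV. (1/m) * g (y p))"
      by (rule affine_on_real_sum[OF g convex_elliptope])
        (use \<open>m \<ge> 1\<close> half_bound in \<open>auto simp: m_def y_def intro: mat_1_plus_sym_unit_in_elliptope\<close>)
    also have "\<dots> = (\<Sum>p\<in>UNIV. (1/m) * g (mat 1) + (1/m) * (Z $ fst p $ snd p * c (fst p) (snd p)))"
      by (intro sum.cong refl)
        (use \<open>m \<ge> 1\<close> in \<open>simp add: y_def affine_on_elliptope_sym_unit_line[OF g half_bound] c_def field_simps\<close>)
    also have "\<dots> = (\<Sum>p\<in>(UNIV::('n \<times> 'n) set). (1/m) * g (mat 1)) + (1/m) * (\<Sum>(i,j)\<in>UNIV \<times> UNIV. c i j * Z$i$j)"
      by (simp add: sum.distrib sum_distrib_left case_prod_beta' ac_simps del: sum_constant)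
    also have "\<dots> = g (mat 1) + (1/m) * (\<Sum>i\<in>UNIV. \<Sum>j\<in>UNIV. c i j * Z$i$j)"
      using \<open>m \<ge> 1\<close> by (simp only: sum_constant m_def[symmetric] sum.cartesian_product) simp
    finally show ?thesis
      using \<open>m \<ge> 1\<close> by (simp add: field_simps)
  qed
  then show ?thesis by blast
qed

section \<open>Vertices of the elliptope\<close>

definition supporting_functional :: "(real^'n^'n \<Rightarrow> real) \<Rightarrow> real^'n^'n \<Rightarrow> bool" where
  "supporting_functional g X \<longleftrightarrow> affine_on elliptope g \<and> (\<forall>Z\<in>elliptope. g Z \<le> g X)"

text \<open>The usual notion of a vertex of a convex body (full-dimensional normal cone), phrased
  through the affine functionals maximised at the point.\<close>
definition elliptope_vertex :: "real^'n^'n \<Rightarrow> bool" where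
  "elliptope_vertex X \<longleftrightarrow>
     (\<forall>Y\<in>elliptope. \<forall>W\<in>elliptope. (\<forall>g. supporting_functional g X \<longrightarrow> g Y = g W) \<longrightarrow> Y = W)"

lemma elliptope_vertexD:
  assumes "elliptope_vertex X" "Y \<in> elliptope" "W \<in> elliptope"
    and "\<And>g. supporting_functional g X \<Longrightarrow> g Y = g W"
  shows "Y = W"
  using assms unfolding elliptope_vertex_def by blast

lemma elliptope_vertex_image:
  fixes \<tau> :: "real^'n^'n \<Rightarrow> real^'n^'n"
  assumes bij: "bij_betw \<tau> elliptope elliptope" and aff: "affine_on elliptope \<tau>"
    and X: "X \<in> elliptope" and vertex: "elliptope_vertex X"
  shows "elliptope_vertex (\<tau> X)"
  unfolding elliptope_vertex_def
proof (intro ballI impI)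
  fix Y W assume Y: "Y \<in> elliptope" and W: "W \<in> elliptope"
    and sep: "\<forall>g. supporting_functional g (\<tau> X) \<longrightarrow> g Y = g W"
  let ?\<iota> = "inv_into elliptope \<tau>"
  have \<iota>_in: "?\<iota> Z \<in> elliptope" and \<tau>_\<iota>: "\<tau> (?\<iota> Z) = Z" if "Z \<in> elliptope" for Z
    using that bij by (auto simp: bij_betw_def inv_into_into f_inv_into_f)
  have \<iota>_\<tau>: "?\<iota> (\<tau> X) = X" using X bij by (simp add: bij_betw_def)
  have "g (?\<iota> Y) = g (?\<iota> W)" if g: "supporting_functional g X" for g
  proof -
    have "affine_on elliptope (g \<circ> ?\<iota>)"
      using g \<iota>_in affine_on_inv_into[OF bij aff convex_elliptope]
      by (intro affine_on_comp) (auto simp: supporting_functional_def)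
    then have "supporting_functional (g \<circ> ?\<iota>) (\<tau> X)"
      using g \<iota>_in \<iota>_\<tau> by (auto simp: supporting_functional_def)
    then show ?thesis using sep by auto
  qed
  then have "?\<iota> Y = ?\<iota> W"
    by (rule elliptope_vertexD[OF vertex \<iota>_in[OF Y] \<iota>_in[OF W]])
  then show "Y = W" using \<tau>_\<iota>[OF Y] \<tau>_\<iota>[OF W] by metis
qed

lemma cut_matrix_elliptope_vertex: "elliptope_vertex (cut_matrix K :: real^'n^'n)"
  unfolding elliptope_vertex_def
proof (intro ballI impI)
  fix Y W :: "real^'n^'n" assume Y: "Y \<in> elliptope" and W: "W \<in> elliptope"
    and sep: "\<forall>g. supporting_functional g (cut_matrix K) \<longrightarrow> g Y = g W"
  let ?s = "sign_vec K"
  have "Y$i$j = W$i$j" for i j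
  proof -
    define g where "g Z = ?s$i * ?s$j * Z$i$j" for Z :: "real^'n^'n"
    have "g Z \<le> 1" if "Z \<in> elliptope" for Z
      using elliptope_entry_bound[OF that, of i j] sign_vec_cases[of K i] sign_vec_cases[of K j]
      by (auto simp: g_def)
    moreover have "g (cut_matrix K) = 1"
      using sign_vec_square[of K i] sign_vec_square[of K j] by (simp add: g_def algebra_simps)
    moreover have "affine_on elliptope g"
      unfolding affine_on_def g_def by (simp add: algebra_simps)
    ultimately have "supporting_functional g (cut_matrix K)"
      by (simp add: supporting_functional_def)
    then have "g Y = g W" using sep by blast
    moreover have "?s$i * ?s$j \<noteq> 0" using sign_vec_cases[of K i] sign_vec_cases[of K j] by auto
    ultimately show ?thesis by (simp add: g_def)
  qed
  then show "Y = W" by (simp add: vec_eq_iff)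
qed

text \<open>Positivity of the form on a vector supported on \<open>{i\<^sub>0, i, j}\<close> forces the sign of
  \<open>X$i$j\<close>.\<close>
lemma elliptope_unimodular_entry:
  fixes X :: "real^'n^'n"
  assumes X: "X \<in> elliptope" and unimodular: "\<And>i j. \<bar>X$i$j\<bar> = 1"
  shows "X$i$j = X$i0$i * X$i0$j"
proof -
  let ?u = "\<lambda>i. X$i0$i"
  have u: "?u i = 1 \<or> ?u i = -1" for i using unimodular[of i0 i] by auto
  consider "i = j" | "i = i0" | "j = i0" | "i \<noteq> j" "i \<noteq> i0" "j \<noteq> i0" by blast
  then show ?thesis
  proof cases
    case 1
    then show ?thesis using u[of i] elliptope_diag[OF X, of i] by auto
  next
    case 2
    then show ?thesis using elliptope_diag[OF X, of i0] by simp
  next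
    case 3
    then show ?thesis using elliptope_diag[OF X, of i0] elliptope_symmetric[OF X, of i i0] by simp
  next
    case 4
    define x :: "real^'n" where
      "x = (\<chi> k. if k = i0 then 1 else if k = i then - ?u i else if k = j then - ?u j else 0)"
    have "x \<bullet> (X *v x) = (\<Sum>a\<in>{i0,i,j}. \<Sum>b\<in>{i0,i,j}. x$a * X$a$b * x$b)"
      by (rule quadratic_form_supported) (auto simp: x_def)
    also have "\<dots> = 2 * (?u i * ?u j * X$i$j) - 1"
    proof -
      have "?u i * ?u i = 1" "?u j * ?u j = 1" using u[of i] u[of j] by auto
      then show ?thesis
        using 4 elliptope_diag[OF X] elliptope_symmetric[OF X, of i i0]
          elliptope_symmetric[OF X, of j i0] elliptope_symmetric[OF X, of i j]
        by (simp add: x_def)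
    qed
    finally have "x \<bullet> (X *v x) = 2 * (?u i * ?u j * X$i$j) - 1" .
    then have "0 \<le> 2 * (?u i * ?u j * X$i$j) - 1"
      using elliptope_psd[OF X, of x] by simp
    moreover have "X$i$j = 1 \<or> X$i$j = -1" using unimodular[of i j] by auto
    ultimately show ?thesis using u[of i] u[of j] by (elim disjE) simp_all
  qed
qed

lemma elliptope_unimodular_imp_cut_matrix:
  fixes X :: "real^'n^'n"
  assumes X: "X \<in> elliptope" and unimodular: "\<And>i j. \<bar>X$i$j\<bar> = 1"
  shows "X \<in> range cut_matrix"
proof -
  obtain i0 :: 'n where True by simp
  have signs: "sign_vec {i. X$i0$i = -1} $ i = X$i0$i" for i
    using unimodular[of i0 i] by (auto simp: sign_vec_def abs_if split: if_splits)
  have "X = cut_matrix {i. X$i0$i = -1}"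
    unfolding vec_eq_iff cut_matrix_entry signs
    using elliptope_unimodular_entry[OF X unimodular] by blast
  then show ?thesis by blast
qed

lemma quadratic_form_lower_bound:
  fixes D :: "real^'n^'n" and x :: "real^'n"
  assumes "\<And>k l. \<bar>D$k$l\<bar> \<le> c"
  shows "- (c * CARD('n)) * (x \<bullet> x) \<le> x \<bullet> (D *v x)"
proof -
  let ?T = "\<Sum>i\<in>UNIV. x$i * x$i"
  have "(\<Sum>k\<in>UNIV. \<Sum>l\<in>UNIV. x$k * x$k + x$l * x$l) = (\<Sum>k\<in>UNIV. CARD('n) * (x$k * x$k) + ?T)"
    by (simp add: sum.distrib)
  also have "\<dots> = CARD('n) * ?T + CARD('n) * ?T"
    by (simp add: sum.distrib sum_distrib_left)
  finally have double_sum: "(\<Sum>k\<in>UNIV. \<Sum>l\<in>UNIV. x$k * x$k + x$l * x$l) = 2 * CARD('n) * (x \<bullet> x)"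
    by (simp add: inner_vec_def)
  have "- (c / 2) * (x$k * x$k + x$l * x$l) \<le> x$k * D$k$l * x$l" for k l
  proof -
    have "\<bar>x$k * D$k$l * x$l\<bar> = \<bar>D$k$l\<bar> * \<bar>x$k * x$l\<bar>" by (simp add: abs_mult)
    also have "\<dots> \<le> c * \<bar>x$k * x$l\<bar>" by (rule mult_right_mono) (use assms in auto)
    finally have "\<bar>x$k * D$k$l * x$l\<bar> \<le> c * \<bar>x$k * x$l\<bar>" .
    moreover have "c * (2 * \<bar>x$k * x$l\<bar>) \<le> c * (x$k * x$k + x$l * x$l)"
      using two_abs_mult_le[of "x$k" "x$l"] assms[of k l] by (simp add: mult_left_mono)
    ultimately show ?thesis by (simp add: abs_le_iff algebra_simps)
  qed
  then have "(\<Sum>k\<in>UNIV. \<Sum>l\<in>UNIV. - (c / 2) * (x$k * x$k + x$l * x$l)) \<le> x \<bullet> (D *v x)"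
    unfolding quadratic_form_eq_double_sum by (intro sum_mono)
  moreover have "(\<Sum>k\<in>UNIV. \<Sum>l\<in>UNIV. - (c / 2) * (x$k * x$k + x$l * x$l))
      = - (c / 2) * (\<Sum>k\<in>UNIV. \<Sum>l\<in>UNIV. x$k * x$k + x$l * x$l)"
    by (simp only: sum_distrib_left)
  ultimately show ?thesis unfolding double_sum by simp
qed

lemma mat_1_plus_small_in_elliptope:
  fixes D :: "real^'n^'n"
  assumes "transpose D = D" and "\<And>i. D$i$i = 0" and "\<And>k l. \<bar>D$k$l\<bar> \<le> c"
    and "0 \<le> e" and "e * c * CARD('n) \<le> 1"
  shows "mat 1 + e *\<^sub>R D \<in> elliptope"
proof (rule elliptopeI)
  show "transpose (mat 1 + e *\<^sub>R D) = mat 1 + e *\<^sub>R D"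
    using assms(1) by (auto simp: transpose_def vec_eq_iff mat_def)
  show "(mat 1 + e *\<^sub>R D) $ i $ i = 1" for i
    using assms(2) by (simp add: mat_def)
  show "0 \<le> x \<bullet> ((mat 1 + e *\<^sub>R D) *v x)" for x :: "real^'n"
  proof -
    have "e * (- (c * CARD('n)) * (x \<bullet> x)) \<le> e * (x \<bullet> (D *v x))"
      using quadratic_form_lower_bound[OF assms(3)] assms(4) by (rule mult_left_mono)
    moreover have "e * c * CARD('n) * (x \<bullet> x) \<le> x \<bullet> x"
      using mult_right_mono[OF assms(5), of "x \<bullet> x"] by simp
    ultimately show ?thesis
      by (simp add: quadratic_form_add quadratic_form_scaleR algebra_simps)
  qed
qed

lemma normalized_line_deriv:
  fixes u v c :: real
  shows "((\<lambda>t. (u + t * v) / sqrt (1 + 2*t*c + t\<^sup>2)) has_real_derivative (v - u*c)) (at 0)"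
proof -
  have "((\<lambda>t. (u + t * v) / sqrt (1 + 2*t*c + t\<^sup>2)) has_real_derivative
      ((v * sqrt (1 + 2*0*c + 0\<^sup>2) - (u + 0 * v) * ((2*c + 2*0) / (2 * sqrt (1 + 2*0*c + 0\<^sup>2))))
        / (sqrt (1 + 2*0*c + 0\<^sup>2))\<^sup>2)) (at 0)"
    by (rule derivative_eq_intros refl | simp)+
  then show ?thesis by simp
qed

text \<open>If \<open>\<bar>X$p$q\<bar> < 1\<close>, replacing row and column \<open>p\<close> of \<open>X\<close> by the normalised combination
  of rows \<open>p\<close> and \<open>q\<close> is a congruence \<open>M X M\<^sup>T\<close>, hence a curve in the elliptope through \<open>X\<close>.
  Every functional maximised at \<open>X\<close> is stationary along its (off-diagonal) tangent, so these
  functionals cannot separate \<open>mat 1\<close> from \<open>mat 1\<close> plus a small multiple of the tangent.\<close>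
context
  fixes X :: "real^'n^'n" and p q :: 'n
  assumes X: "X \<in> elliptope" and pq: "p \<noteq> q" and X_pq: "\<bar>X$p$q\<bar> < 1"
begin

definition "row_norm t = sqrt (1 + 2*t*X$p$q + t\<^sup>2)"

definition "shear t = (\<chi> k a. if k = p then ((if a = p then 1 else 0) + (if a = q then t else 0)) / row_norm t
                              else (if a = k then 1 else (0::real)))"

definition "curve t = (\<chi> k l. if k = p \<and> l = p then 1
    else if k = p then (X$p$l + t * X$q$l) / row_norm t
    else if l = p then (X$k$p + t * X$k$q) / row_norm t else X$k$l)"

definition "curve_tangent = (\<chi> k l. if k = p \<and> l = p then 0
    else if k = p then X$q$l - X$p$l * X$p$q
    else if l = p then X$k$q - X$k$p * X$p$q else 0)"

lemma X_pq_square: "X$p$q * X$p$q < 1"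
  using X_pq by (metis abs_mult_less abs_mult_self_eq abs_one mult_1_right)

lemma row_norm_square: "(row_norm t)\<^sup>2 = 1 + 2*t*X$p$q + t\<^sup>2" and row_norm_pos: "row_norm t > 0"
proof -
  note X_pq_square
  moreover have "1 + 2*t*X$p$q + t\<^sup>2 = (t + X$p$q)\<^sup>2 + (1 - X$p$q * X$p$q)"
    by (simp add: power2_eq_square algebra_simps)
  ultimately have "1 + 2*t*X$p$q + t\<^sup>2 > 0" by (smt (verit) zero_le_power2)
  then show "(row_norm t)\<^sup>2 = 1 + 2*t*X$p$q + t\<^sup>2" and "row_norm t > 0"
    unfolding row_norm_def by simp_all
qed

lemma shear_row_sum:
  "(\<Sum>a\<in>UNIV. shear t $ k $ a * f a) = (if k = p then (f p + t * f q) / row_norm t else f k)"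
proof (cases "k = p")
  case True
  have "(\<Sum>a\<in>UNIV. shear t $ k $ a * f a)
      = (\<Sum>a\<in>UNIV. (if a = p then f a / row_norm t else 0) + (if a = q then t * f a / row_norm t else 0))"
    by (rule sum.cong) (use True pq in \<open>auto simp: shear_def add_divide_distrib\<close>)
  then show ?thesis using True by (simp add: sum.distrib add_divide_distrib)
next
  case False
  have "(\<Sum>a\<in>UNIV. shear t $ k $ a * f a) = (\<Sum>a\<in>UNIV. if a = k then f a else 0)"
    by (rule sum.cong) (use False in \<open>auto simp: shear_def\<close>)
  then show ?thesis using False by simp
qed

lemma curve_eq_congruence: "curve t = (shear t ** X) ** transpose (shear t)"
proof -
  have MX: "(shear t ** X) $ k $ b = (if k = p then (X$p$b + t * X$q$b) / row_norm t else X$k$b)" for k b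
    unfolding matrix_matrix_mult_def by (simp add: shear_row_sum)
  have "((shear t ** X) ** transpose (shear t)) $ k $ l
      = (\<Sum>b\<in>UNIV. shear t $ l $ b * (shear t ** X) $ k $ b)" for k l
    unfolding matrix_matrix_mult_def by (simp add: transpose_def mult.commute)
  then have E: "((shear t ** X) ** transpose (shear t)) $ k $ l
     = (if l = p then ((shear t ** X) $ k $ p + t * (shear t ** X) $ k $ q) / row_norm t
        else (shear t ** X) $ k $ l)" for k l
    by (simp add: shear_row_sum)
  have "curve t $ k $ l = ((shear t ** X) ** transpose (shear t)) $ k $ l" for k l
  proof -
    have sym: "X$q$p = X$p$q" using elliptope_symmetric[OF X] by simp
    have diag: "X$p$p = 1" "X$q$q = 1" using elliptope_diag[OF X] by auto
    have nz: "row_norm t \<noteq> 0" using row_norm_pos[of t] by simp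
    consider "k = p \<and> l = p" | "k = p \<and> l \<noteq> p" | "k \<noteq> p \<and> l = p" | "k \<noteq> p \<and> l \<noteq> p" by blast
    then show ?thesis
    proof cases
      case 1
      have "((X$p$p + t * X$q$p) / row_norm t + t * ((X$p$q + t * X$q$q) / row_norm t)) / row_norm t
          = (1 + 2*t*X$p$q + t\<^sup>2) / (row_norm t)\<^sup>2"
        using diag sym nz by (simp add: field_simps power2_eq_square)
      also have "\<dots> = 1" using row_norm_pos[of t] unfolding row_norm_square[symmetric] by simp
      finally show ?thesis using 1 pq by (simp add: E MX curve_def)
    next
      case 3
      then show ?thesis using pq by (simp add: E MX curve_def add_divide_distrib)
    qed (simp_all add: E MX curve_def)
  qed
  then show ?thesis by (simp add: vec_eq_iff)
qed

lemma curve_in_elliptope: "curve t \<in> elliptope"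
proof (rule elliptopeI)
  show "transpose (curve t) = curve t"
    using elliptope_symmetric[OF X] by (auto simp: vec_eq_iff transpose_def curve_def)
  show "curve t $ i $ i = 1" for i
    using elliptope_diag[OF X] by (simp add: curve_def)
  show "0 \<le> x \<bullet> (curve t *v x)" for x
  proof -
    let ?y = "transpose (shear t) *v x"
    have "curve t *v x = shear t *v (X *v ?y)"
      by (simp only: curve_eq_congruence matrix_vector_mul_assoc matrix_mul_assoc)
    then have "x \<bullet> (curve t *v x) = (x v* shear t) \<bullet> (X *v ?y)"
      by (simp add: dot_lmul_matrix)
    also have "\<dots> = ?y \<bullet> (X *v ?y)" by (simp add: transpose_matrix_vector)
    finally show ?thesis using elliptope_psd[OF X] by simp
  qed
qed

lemma curve_0: "curve 0 = X"
  using elliptope_diag[OF X] by (auto simp: vec_eq_iff curve_def row_norm_def)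

lemma curve_has_derivative: "((\<lambda>t. curve t $ k $ l) has_real_derivative curve_tangent $ k $ l) (at 0)"
proof -
  consider "k = p \<and> l = p" | "k = p \<and> l \<noteq> p" | "k \<noteq> p \<and> l = p" | "k \<noteq> p \<and> l \<noteq> p" by blast
  then show ?thesis
  proof cases
    case 2
    then show ?thesis using normalized_line_deriv[of "X$p$l" "X$q$l" "X$p$q"]
      by (simp add: curve_def curve_tangent_def row_norm_def)
  next
    case 3
    then show ?thesis using normalized_line_deriv[of "X$k$p" "X$k$q" "X$p$q"]
      by (simp add: curve_def curve_tangent_def row_norm_def)
  qed (simp_all add: curve_def curve_tangent_def)
qed

lemma supporting_functional_curve_tangent:
  assumes g: "supporting_functional g X" and Y: "mat 1 + e *\<^sub>R curve_tangent \<in> elliptope"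
  shows "g (mat 1 + e *\<^sub>R curve_tangent) = g (mat 1)"
proof -
  have g_affine: "affine_on elliptope g" and g_max: "\<forall>Z\<in>elliptope. g Z \<le> g X"
    using g by (auto simp: supporting_functional_def)
  obtain a B where repr: "\<forall>Z\<in>elliptope. g Z = a + (\<Sum>i\<in>UNIV. \<Sum>j\<in>UNIV. B i j * Z$i$j)"
    using affine_on_elliptope_linear_repr[OF g_affine] by blast
  define h where "h t = a + (\<Sum>i\<in>UNIV. \<Sum>j\<in>UNIV. B i j * curve t $ i $ j)" for t
  have h_g: "h t = g (curve t)" for t using repr curve_in_elliptope by (simp add: h_def)
  have deriv: "(h has_real_derivative (0 + (\<Sum>i\<in>UNIV. \<Sum>j\<in>UNIV. B i j * curve_tangent $ i $ j))) (at 0)"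
    unfolding h_def by (intro derivative_intros DERIV_cmult curve_has_derivative)
  have max: "\<forall>s. \<bar>0 - s\<bar> < 1 \<longrightarrow> h s \<le> h 0"
    using g_max curve_in_elliptope curve_0 h_g by auto
  have "0 + (\<Sum>i\<in>UNIV. \<Sum>j\<in>UNIV. B i j * curve_tangent $ i $ j) = 0"
    by (rule DERIV_local_max[OF deriv zero_less_one max])
  moreover have "g (mat 1 + e *\<^sub>R curve_tangent)
      = a + (\<Sum>i\<in>UNIV. \<Sum>j\<in>UNIV. B i j * mat 1 $ i $ j)
          + e * (\<Sum>i\<in>UNIV. \<Sum>j\<in>UNIV. B i j * curve_tangent $ i $ j)"
    using repr Y by (simp add: algebra_simps sum.distrib sum_distrib_left)
  ultimately show ?thesis using repr[rule_format, OF mat_1_in_elliptope] by simp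
qed

lemma curve_tangent_bound: "\<bar>curve_tangent $ k $ l\<bar> \<le> 2"
proof -
  have "\<bar>X$a$b - X$c$d * X$p$q\<bar> \<le> 2" for a b c d
  proof -
    have "\<bar>X$c$d * X$p$q\<bar> \<le> 1"
      using elliptope_entry_bound[OF X, of c d] X_pq by (simp add: abs_mult mult_le_one)
    then show ?thesis using elliptope_entry_bound[OF X, of a b] by linarith
  qed
  then show ?thesis by (auto simp: curve_tangent_def)
qed

lemma curve_tangent_pq: "curve_tangent $ p $ q \<noteq> 0"
proof -
  have "X$p$q * X$p$q \<noteq> 1" using X_pq_square by simp
  then show ?thesis using pq elliptope_diag[OF X, of q] by (simp add: curve_tangent_def)
qed

lemma not_elliptope_vertex: "\<not> elliptope_vertex X"
proof
  assume vertex: "elliptope_vertex X"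
  define e :: real where "e = 1 / (2 * real CARD('n))"
  let ?Y = "mat 1 + e *\<^sub>R curve_tangent"
  have Y: "?Y \<in> elliptope"
  proof (rule mat_1_plus_small_in_elliptope[OF _ _ curve_tangent_bound])
    show "transpose curve_tangent = curve_tangent"
      using elliptope_symmetric[OF X] by (auto simp: vec_eq_iff transpose_def curve_tangent_def)
    show "curve_tangent $ i $ i = 0" for i by (simp add: curve_tangent_def)
    show "0 \<le> e" "e * 2 * real CARD('n) \<le> 1" by (simp_all add: e_def)
  qed
  have "?Y = mat 1"
  proof (rule elliptope_vertexD[OF vertex Y mat_1_in_elliptope])
    fix g assume "supporting_functional g X"
    from supporting_functional_curve_tangent[OF this Y] show "g ?Y = g (mat 1)" .
  qed
  moreover have "?Y $ p $ q \<noteq> mat 1 $ p $ q"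
    using curve_tangent_pq pq by (simp add: mat_def e_def)
  ultimately show False by simp
qed

end

lemma elliptope_vertex_iff_cut_matrix:
  fixes X :: "real^'n^'n"
  assumes X: "X \<in> elliptope"
  shows "elliptope_vertex X \<longleftrightarrow> X \<in> range cut_matrix"
proof
  assume "X \<in> range cut_matrix"
  then show "elliptope_vertex X" using cut_matrix_elliptope_vertex by auto
next
  assume vertex: "elliptope_vertex X"
  show "X \<in> range cut_matrix"
  proof (rule elliptope_unimodular_imp_cut_matrix[OF X], rule ccontr)
    fix p q assume ne: "\<bar>X$p$q\<bar> \<noteq> 1"
    then have "p \<noteq> q" using elliptope_diag[OF X] by auto
    moreover have "\<bar>X$p$q\<bar> < 1" using ne elliptope_entry_bound[OF X, of p q] by simp
    ultimately show False using not_elliptope_vertex[OF X] vertex by blast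
  qed
qed

lemma affine_bij_cut_matrix:
  fixes \<tau> :: "real^'n^'n \<Rightarrow> real^'n^'n"
  assumes "bij_betw \<tau> elliptope elliptope" "affine_on elliptope \<tau>"
  shows "\<tau> (cut_matrix K) \<in> range cut_matrix"
proof -
  have "\<tau> (cut_matrix K) \<in> elliptope"
    using assms(1) cut_matrix_in_elliptope by (auto simp: bij_betw_def)
  moreover have "elliptope_vertex (\<tau> (cut_matrix K))"
    by (rule elliptope_vertex_image[OF assms cut_matrix_in_elliptope cut_matrix_elliptope_vertex])
  ultimately show ?thesis using elliptope_vertex_iff_cut_matrix by blast
qed

section \<open>Non-crossing cuts\<close>

text \<open>The centroid of \<open>A\<^sub>0\<close>, \<open>X\<close>, \<open>Y\<close> lies on the open segment between a fourth cut matrix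
  \<open>Z\<close> and a point of the elliptope. This is invariant under affine bijections fixing \<open>A\<^sub>0\<close>,
  and for cut matrices it singles out the non-crossing pairs of cuts.\<close>
definition triangle_rel :: "real^'n^'n \<Rightarrow> real^'n^'n \<Rightarrow> bool" where
  "triangle_rel X Y \<longleftrightarrow> X \<noteq> ones_matrix \<and> Y \<noteq> ones_matrix \<and> X \<noteq> Y \<and>
     (\<exists>Z\<in>range cut_matrix. Z \<noteq> ones_matrix \<and> Z \<noteq> X \<and> Z \<noteq> Y \<and>
        (1/8) *\<^sub>R (3 *\<^sub>R (ones_matrix + X + Y) - Z) \<in> elliptope)"

lemma centroid_eq_combination_iff:
  fixes a b c p z :: "'a::real_vector"
  shows "(1/3) *\<^sub>R a + (1/3) *\<^sub>R b + (1/3) *\<^sub>R c = (1 - 1/9) *\<^sub>R p + (1/9) *\<^sub>R z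
     \<longleftrightarrow> p = (1/8) *\<^sub>R (3 *\<^sub>R (a + b + c) - z)"
proof
  assume "(1/3) *\<^sub>R a + (1/3) *\<^sub>R b + (1/3) *\<^sub>R c = (1 - 1/9) *\<^sub>R p + (1/9) *\<^sub>R z"
  then have "9 *\<^sub>R ((1/3) *\<^sub>R a + (1/3) *\<^sub>R b + (1/3) *\<^sub>R c) = 9 *\<^sub>R ((1 - 1/9) *\<^sub>R p + (1/9) *\<^sub>R z)"
    by simp
  then have "8 *\<^sub>R p + z = 3 *\<^sub>R (a + b + c)" by (simp add: scaleR_add_right)
  then have "8 *\<^sub>R p = 3 *\<^sub>R (a + b + c) - z" by (simp add: algebra_simps)
  then have "(1/8) *\<^sub>R (8 *\<^sub>R p) = (1/8) *\<^sub>R (3 *\<^sub>R (a + b + c) - z)" by simp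
  then show "p = (1/8) *\<^sub>R (3 *\<^sub>R (a + b + c) - z)" by simp
next
  assume p: "p = (1/8) *\<^sub>R (3 *\<^sub>R (a + b + c) - z)"
  show "(1/3) *\<^sub>R a + (1/3) *\<^sub>R b + (1/3) *\<^sub>R c = (1 - 1/9) *\<^sub>R p + (1/9) *\<^sub>R z"
    unfolding p by (simp add: algebra_simps)
qed

lemma triangle_rel_image:
  fixes \<tau> :: "real^'n^'n \<Rightarrow> real^'n^'n"
  assumes bij: "bij_betw \<tau> elliptope elliptope" and aff: "affine_on elliptope \<tau>"
    and fix_ones: "\<tau> ones_matrix = ones_matrix"
    and X: "X \<in> range cut_matrix" and Y: "Y \<in> range cut_matrix" and rel: "triangle_rel X Y"
  shows "triangle_rel (\<tau> X) (\<tau> Y)"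
proof -
  have inj: "inj_on \<tau> elliptope" using bij by (simp add: bij_betw_def)
  have X_in: "X \<in> elliptope" and Y_in: "Y \<in> elliptope" using X Y cut_matrix_in_elliptope by auto
  obtain Z where Z: "Z \<in> range cut_matrix" "Z \<noteq> ones_matrix" "Z \<noteq> X" "Z \<noteq> Y"
    and P_in: "(1/8) *\<^sub>R (3 *\<^sub>R (ones_matrix + X + Y) - Z) \<in> elliptope"
    and ne: "X \<noteq> ones_matrix" "Y \<noteq> ones_matrix" "X \<noteq> Y"
    using rel unfolding triangle_rel_def by blast
  define P where "P = (1/8) *\<^sub>R (3 *\<^sub>R (ones_matrix + X + Y) - Z)"
  have Z_in: "Z \<in> elliptope" using Z(1) cut_matrix_in_elliptope by auto
  have "(1/3) *\<^sub>R ones_matrix + (1/3) *\<^sub>R \<tau> X + (1/3) *\<^sub>R \<tau> Y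
      = \<tau> ((1/3) *\<^sub>R ones_matrix + (1/3) *\<^sub>R X + (1/3) *\<^sub>R Y)"
    using affine_on_centroid3[OF aff convex_elliptope ones_matrix_in_elliptope X_in Y_in] fix_ones
    by simp
  also have "\<dots> = \<tau> ((1 - 1/9) *\<^sub>R P + (1/9) *\<^sub>R Z)"
    using centroid_eq_combination_iff[of ones_matrix X Y P Z] by (simp add: P_def)
  also have "\<dots> = (1 - 1/9) *\<^sub>R \<tau> P + (1/9) *\<^sub>R \<tau> Z"
    by (rule affine_onD[OF aff P_in[folded P_def] Z_in]) auto
  finally have "\<tau> P = (1/8) *\<^sub>R (3 *\<^sub>R (ones_matrix + \<tau> X + \<tau> Y) - \<tau> Z)"
    by (simp only: centroid_eq_combination_iff)
  moreover have "\<tau> P \<in> elliptope" using P_in[folded P_def] bij by (auto simp: bij_betw_def)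
  moreover have "\<tau> Z \<in> range cut_matrix" using Z(1) affine_bij_cut_matrix[OF bij aff] by blast
  moreover have "\<tau> Z \<noteq> ones_matrix" "\<tau> Z \<noteq> \<tau> X" "\<tau> Z \<noteq> \<tau> Y"
    "\<tau> X \<noteq> ones_matrix" "\<tau> Y \<noteq> ones_matrix" "\<tau> X \<noteq> \<tau> Y"
    using inj Z ne X_in Y_in Z_in ones_matrix_in_elliptope fix_ones by (metis inj_on_def)+
  ultimately show ?thesis unfolding triangle_rel_def by metis
qed

definition noncrossing :: "'n set \<Rightarrow> 'n set \<Rightarrow> bool" where
  "noncrossing K L \<longleftrightarrow> K \<inter> L = {} \<or> K \<subseteq> L \<or> L \<subseteq> K \<or> K \<union> L = UNIV"

lemma cut_quadruple_quadratic_form: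
  fixes x :: "real^'n"
  shows "x \<bullet> (((1/8) *\<^sub>R (3 *\<^sub>R (ones_matrix + cut_matrix K + cut_matrix L) - cut_matrix M)) *v x)
    = (1/8) * (3 * ((sign_vec {} \<bullet> x)\<^sup>2 + (sign_vec K \<bullet> x)\<^sup>2 + (sign_vec L \<bullet> x)\<^sup>2) - (sign_vec M \<bullet> x)\<^sup>2)"
  by (simp add: quadratic_form_add quadratic_form_diff quadratic_form_scaleR
      cut_matrix_quadratic_form ones_matrix_eq_cut_matrix_empty)

lemma sum3_square_le: "(x + y + z)\<^sup>2 \<le> 3 * (x\<^sup>2 + y\<^sup>2 + (z::real)\<^sup>2)"
proof -
  have "0 \<le> (x - y)\<^sup>2 + (y - z)\<^sup>2 + (x - z)\<^sup>2" by simp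
  then show ?thesis by (simp add: power2_eq_square algebra_simps)
qed

lemma signed_sum_square_le:
  fixes u v w e0 e1 e2 :: real
  assumes "e0 = 1 \<or> e0 = -1" "e1 = 1 \<or> e1 = -1" "e2 = 1 \<or> e2 = -1"
  shows "(e0 * u + e1 * v + e2 * w)\<^sup>2 \<le> 3 * (u\<^sup>2 + v\<^sup>2 + w\<^sup>2)"
proof -
  have "(e0 * u)\<^sup>2 = u\<^sup>2" "(e1 * v)\<^sup>2 = v\<^sup>2" "(e2 * w)\<^sup>2 = w\<^sup>2"
    using assms by auto
  then show ?thesis using sum3_square_le[of "e0 * u" "e1 * v" "e2 * w"] by simp
qed

lemma sign_vec_sym_diff_noncrossing:
  fixes K L :: "'n::finite set"
  assumes "noncrossing K L"
  obtains e0 e1 e2 :: real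
  where "e0 = 1 \<or> e0 = -1" "e1 = 1 \<or> e1 = -1" "e2 = 1 \<or> e2 = -1"
    and "sign_vec ((K - L) \<union> (L - K)) = e0 *\<^sub>R sign_vec {} + e1 *\<^sub>R sign_vec K + e2 *\<^sub>R sign_vec L"
proof -
  let ?M = "(K - L) \<union> (L - K)" and ?a = "sign_vec K" and ?b = "sign_vec L"
  have comb: "sign_vec ?M = e0 *\<^sub>R sign_vec {} + e1 *\<^sub>R ?a + e2 *\<^sub>R ?b"
    if "\<And>i. sign_vec ?M $ i = e0 + e1 * ?a$i + e2 * ?b$i" for e0 e1 e2 :: real
    using that by (simp add: vec_eq_iff sign_vec_def)
  consider "K \<inter> L = {}" | "K \<subseteq> L" | "L \<subseteq> K" | "K \<union> L = UNIV"
    using assms unfolding noncrossing_def by blast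
  then show thesis
  proof cases
    case 1
    have "sign_vec ?M $ i = -1 + 1 * ?a$i + 1 * ?b$i" for i
      using 1 by (cases "i \<in> K"; cases "i \<in> L") (auto simp: sign_vec_def)
    from comb[OF this] show thesis by (rule that[rotated 3]) simp_all
  next
    case 2
    have "sign_vec ?M $ i = 1 + (-1) * ?a$i + 1 * ?b$i" for i
      using 2 by (cases "i \<in> K"; cases "i \<in> L") (auto simp: sign_vec_def)
    from comb[OF this] show thesis by (rule that[rotated 3]) simp_all
  next
    case 3
    have "sign_vec ?M $ i = 1 + 1 * ?a$i + (-1) * ?b$i" for i
      using 3 by (cases "i \<in> K"; cases "i \<in> L") (auto simp: sign_vec_def)
    from comb[OF this] show thesis by (rule that[rotated 3]) simp_all
  next
    case 4
    have "sign_vec ?M $ i = -1 + (-1) * ?a$i + (-1) * ?b$i" for i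
      using 4 by (cases "i \<in> K"; cases "i \<in> L") (auto simp: sign_vec_def)
    from comb[OF this] show thesis by (rule that[rotated 3]) simp_all
  qed
qed

lemma cut_quadruple_in_elliptope:
  fixes K L M :: "'n::finite set"
  assumes e: "e0 = 1 \<or> e0 = -1" "e1 = 1 \<or> e1 = -1" "e2 = 1 \<or> e2 = -1"
    and comb: "sign_vec M = e0 *\<^sub>R sign_vec {} + e1 *\<^sub>R sign_vec K + e2 *\<^sub>R sign_vec L"
  shows "(1/8) *\<^sub>R (3 *\<^sub>R (ones_matrix + cut_matrix K + cut_matrix L) - cut_matrix M) \<in> elliptope"
proof (rule elliptopeI)
  show "transpose ((1/8) *\<^sub>R (3 *\<^sub>R (ones_matrix + cut_matrix K + cut_matrix L) - cut_matrix M))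
      = (1/8) *\<^sub>R (3 *\<^sub>R (ones_matrix + cut_matrix K + cut_matrix L) - cut_matrix M)"
    by (simp add: vec_eq_iff transpose_def ones_matrix_def mult.commute)
  show "((1/8) *\<^sub>R (3 *\<^sub>R (ones_matrix + cut_matrix K + cut_matrix L) - cut_matrix M)) $ i $ i = 1" for i
    by (simp add: ones_matrix_def)
  show "0 \<le> x \<bullet> (((1/8) *\<^sub>R (3 *\<^sub>R (ones_matrix + cut_matrix K + cut_matrix L) - cut_matrix M)) *v x)"
    for x
  proof -
    have "sign_vec M \<bullet> x = e0 * (sign_vec {} \<bullet> x) + e1 * (sign_vec K \<bullet> x) + e2 * (sign_vec L \<bullet> x)"
      unfolding comb by (simp add: inner_add_left)
    then show ?thesis
      using signed_sum_square_le[OF e, of "sign_vec {} \<bullet> x" "sign_vec K \<bullet> x" "sign_vec L \<bullet> x"]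
      unfolding cut_quadruple_quadratic_form by simp
  qed
qed

lemma noncrossing_imp_triangle_rel:
  fixes K L :: "'n::finite set"
  assumes K: "K \<noteq> {}" "K \<noteq> UNIV" and L: "L \<noteq> {}" "L \<noteq> UNIV" "L \<noteq> K" "L \<noteq> - K"
    and nc: "noncrossing K L"
  shows "triangle_rel (cut_matrix K) (cut_matrix L)"
proof -
  define M where "M = (K - L) \<union> (L - K)"
  obtain e0 e1 e2 :: real where e: "e0 = 1 \<or> e0 = -1" "e1 = 1 \<or> e1 = -1" "e2 = 1 \<or> e2 = -1"
    and comb: "sign_vec M = e0 *\<^sub>R sign_vec {} + e1 *\<^sub>R sign_vec K + e2 *\<^sub>R sign_vec L"
    by (rule sign_vec_sym_diff_noncrossing[OF nc, folded M_def])
  have P_in: "(1/8) *\<^sub>R (3 *\<^sub>R (ones_matrix + cut_matrix K + cut_matrix L) - cut_matrix M) \<in> elliptope"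
    by (rule cut_quadruple_in_elliptope[OF e comb])
  have "M \<noteq> {}" "M \<noteq> UNIV" "M \<noteq> K" "M \<noteq> - K" "M \<noteq> L" "M \<noteq> - L" "K \<noteq> - L"
    using K L by (auto simp: M_def)
  then have "cut_matrix M \<noteq> ones_matrix" "cut_matrix M \<noteq> cut_matrix K" "cut_matrix M \<noteq> cut_matrix L"
    "cut_matrix K \<noteq> ones_matrix" "cut_matrix L \<noteq> ones_matrix" "cut_matrix K \<noteq> cut_matrix L"
    using K L by (simp_all add: ones_matrix_eq_cut_matrix_empty cut_matrix_eq_iff)
  with P_in show ?thesis unfolding triangle_rel_def by blast
qed

lemma atom_splitting_separating_vector:
  fixes K L M :: "'n::finite set"
  assumes same: "i \<in> K \<longleftrightarrow> i' \<in> K" "i \<in> L \<longleftrightarrow> i' \<in> L" and splits: "\<not> (i \<in> M \<longleftrightarrow> i' \<in> M)"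
  obtains x :: "real^'n"
  where "sign_vec {} \<bullet> x = 0" "sign_vec K \<bullet> x = 0" "sign_vec L \<bullet> x = 0" "sign_vec M \<bullet> x \<noteq> 0"
proof -
  have "i \<noteq> i'" using splits by blast
  define x :: "real^'n" where "x = (\<chi> k. if k = i then 1 else if k = i' then -1 else 0)"
  have inner_x: "s \<bullet> x = s$i - s$i'" for s :: "real^'n"
  proof -
    have "s \<bullet> x = (\<Sum>k\<in>{i, i'}. s$k * x$k)" by (rule inner_supported) (auto simp: x_def)
    then show ?thesis using \<open>i \<noteq> i'\<close> by (simp add: x_def)
  qed
  show thesis
    by (rule that[of x]) (use same splits in \<open>simp_all add: inner_x sign_vec_def\<close>)
qed

lemma union_of_atoms_eq:
  fixes K L M :: "'n set"
  assumes r1: "r1 \<in> K" "r1 \<in> L" and r2: "r2 \<in> K" "r2 \<notin> L"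
    and r3: "r3 \<notin> K" "r3 \<in> L" and r4: "r4 \<notin> K" "r4 \<notin> L"
    and atoms: "\<And>i i'. i \<in> K \<longleftrightarrow> i' \<in> K \<Longrightarrow> i \<in> L \<longleftrightarrow> i' \<in> L \<Longrightarrow> i \<in> M \<longleftrightarrow> i' \<in> M"
  shows "M = {i. if i \<in> K then if i \<in> L then r1 \<in> M else r2 \<in> M else if i \<in> L then r3 \<in> M else r4 \<in> M}"
proof (rule set_eqI)
  fix i
  define rep where "rep = (if i \<in> K then if i \<in> L then r1 else r2 else if i \<in> L then r3 else r4)"
  have "i \<in> M \<longleftrightarrow> rep \<in> M" by (rule atoms) (use r1 r2 r3 r4 in \<open>auto simp: rep_def\<close>)
  then show "i \<in> M \<longleftrightarrow>
      i \<in> {i. if i \<in> K then if i \<in> L then r1 \<in> M else r2 \<in> M else if i \<in> L then r3 \<in> M else r4 \<in> M}"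
    by (simp add: rep_def)
qed

lemma four_atoms_separating_vector:
  fixes K L M :: "'n::finite set"
  assumes r1: "r1 \<in> K" "r1 \<in> L" and r2: "r2 \<in> K" "r2 \<notin> L"
    and r3: "r3 \<notin> K" "r3 \<in> L" and r4: "r4 \<notin> K" "r4 \<notin> L"
    and atoms: "\<And>i i'. i \<in> K \<longleftrightarrow> i' \<in> K \<Longrightarrow> i \<in> L \<longleftrightarrow> i' \<in> L \<Longrightarrow> i \<in> M \<longleftrightarrow> i' \<in> M"
    and M: "M \<noteq> {}" "M \<noteq> UNIV" "M \<noteq> K" "M \<noteq> - K" "M \<noteq> L" "M \<noteq> - L"
  obtains x :: "real^'n"
  where "sign_vec {} \<bullet> x = 0" "sign_vec K \<bullet> x = 0" "sign_vec L \<bullet> x = 0" "sign_vec M \<bullet> x \<noteq> 0"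
proof -
  define b1 b2 b3 b4 where "b1 = (r1 \<in> M)" and "b2 = (r2 \<in> M)" and "b3 = (r3 \<in> M)" and "b4 = (r4 \<in> M)"
  have M_eq: "M = {i. if i \<in> K then if i \<in> L then b1 else b2 else if i \<in> L then b3 else b4}"
    unfolding b1_def b2_def b3_def b4_def by (rule union_of_atoms_eq[OF r1 r2 r3 r4 atoms])
  have distinct: "r1 \<noteq> r2" "r1 \<noteq> r3" "r1 \<noteq> r4" "r2 \<noteq> r3" "r2 \<noteq> r4" "r3 \<noteq> r4"
    using r1 r2 r3 r4 by auto
  define x :: "real^'n" where
    "x = (\<chi> k. if k = r1 then 1 else if k = r2 then -1 else if k = r3 then -1 else if k = r4 then 1 else 0)"
  have inner_x: "s \<bullet> x = s$r1 - s$r2 - s$r3 + s$r4" for s :: "real^'n"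
  proof -
    have "s \<bullet> x = (\<Sum>k\<in>{r1, r2, r3, r4}. s$k * x$k)"
      by (rule inner_supported) (auto simp: x_def)
    then show ?thesis using distinct by (simp add: x_def)
  qed
  have "sign_vec M \<bullet> x \<noteq> 0"
  proof
    assume "sign_vec M \<bullet> x = 0"
    then have "(if b1 then -1 else 1) - (if b2 then -1 else 1) - (if b3 then -1 else 1) + (if b4 then -1 else 1)
        = (0::real)"
      by (simp add: inner_x sign_vec_def b1_def b2_def b3_def b4_def)
    then have "M = {} \<or> M = UNIV \<or> M = K \<or> M = - K \<or> M = L \<or> M = - L"
      unfolding M_eq by (cases b1; cases b2; cases b3; cases b4) (simp_all add: Collect_neg_eq)
    then show False using M by blast
  qed
  then show thesis
    by (intro that[of x]) (use r1 r2 r3 r4 in \<open>simp_all add: inner_x sign_vec_def\<close>)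
qed

text \<open>For crossing \<open>K\<close>, \<open>L\<close> the sign vector of any further cut \<open>M\<close> is not in the span of
  those of \<open>\<emptyset>\<close>, \<open>K\<close>, \<open>L\<close>: either \<open>M\<close> splits an atom of the partition generated by \<open>K\<close>
  and \<open>L\<close>, or it is a union of atoms, all four of which are nonempty.\<close>
lemma crossing_separating_vector:
  fixes K L M :: "'n::finite set"
  assumes crossing: "\<not> noncrossing K L"
    and M: "M \<noteq> {}" "M \<noteq> UNIV" "M \<noteq> K" "M \<noteq> - K" "M \<noteq> L" "M \<noteq> - L"
  obtains x :: "real^'n"
  where "sign_vec {} \<bullet> x = 0" "sign_vec K \<bullet> x = 0" "sign_vec L \<bullet> x = 0" "sign_vec M \<bullet> x \<noteq> 0"
proof (cases "\<exists>i i'. (i \<in> K \<longleftrightarrow> i' \<in> K) \<and> (i \<in> L \<longleftrightarrow> i' \<in> L) \<and> \<not> (i \<in> M \<longleftrightarrow> i' \<in> M)")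
  case True
  then show thesis using atom_splitting_separating_vector that by blast
next
  case False
  moreover obtain r1 r2 r3 r4 where "r1 \<in> K" "r1 \<in> L" "r2 \<in> K" "r2 \<notin> L"
    "r3 \<notin> K" "r3 \<in> L" "r4 \<notin> K" "r4 \<notin> L"
    using crossing unfolding noncrossing_def by blast
  ultimately show thesis using four_atoms_separating_vector[OF _ _ _ _ _ _ _ _ _ M] that by blast
qed

lemma triangle_rel_imp_noncrossing:
  fixes K L :: "'n::finite set"
  assumes rel: "triangle_rel (cut_matrix K) (cut_matrix L)"
  shows "noncrossing K L"
proof (rule ccontr)
  assume crossing: "\<not> noncrossing K L"
  obtain M where M: "cut_matrix M \<noteq> ones_matrix" "cut_matrix M \<noteq> cut_matrix K" "cut_matrix M \<noteq> cut_matrix L"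
    and P_in: "(1/8) *\<^sub>R (3 *\<^sub>R (ones_matrix + cut_matrix K + cut_matrix L) - cut_matrix M) \<in> elliptope"
    using rel unfolding triangle_rel_def by blast
  have "M \<noteq> {}" "M \<noteq> UNIV" "M \<noteq> K" "M \<noteq> - K" "M \<noteq> L" "M \<noteq> - L"
    using M unfolding ones_matrix_eq_cut_matrix_empty cut_matrix_eq_iff by auto
  then obtain x :: "real^'n" where
    "sign_vec {} \<bullet> x = 0" "sign_vec K \<bullet> x = 0" "sign_vec L \<bullet> x = 0" "sign_vec M \<bullet> x \<noteq> 0"
    using crossing_separating_vector[OF crossing] by metis
  then have "x \<bullet> (((1/8) *\<^sub>R (3 *\<^sub>R (ones_matrix + cut_matrix K + cut_matrix L) - cut_matrix M)) *v x) < 0"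
    unfolding cut_quadruple_quadratic_form by simp
  then show False using elliptope_psd[OF P_in, of x] by simp
qed

section \<open>Counting related cuts\<close>

lemma card_Compl_eq: "card (- A) = CARD('n) - card (A :: 'n::finite set)"
  by (simp add: Compl_eq_Diff_UNIV card_Diff_subset)

lemma disjoint_or_comparable_subsets_eq:
  assumes "K \<subseteq> U"
  shows "{L. L \<subseteq> U \<and> L \<noteq> {} \<and> L \<noteq> K \<and> (K \<inter> L = {} \<or> K \<subseteq> L \<or> L \<subseteq> K)}
       = (Pow (U - K) - {{}}) \<union> ((\<union>) K ` Pow (U - K) - {K}) \<union> (Pow K - {{}, K})"
proof (intro set_eqI iffI)
  fix L assume "L \<in> {L. L \<subseteq> U \<and> L \<noteq> {} \<and> L \<noteq> K \<and> (K \<inter> L = {} \<or> K \<subseteq> L \<or> L \<subseteq> K)}"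
  then have L: "L \<subseteq> U" "L \<noteq> {}" "L \<noteq> K" and "K \<inter> L = {} \<or> K \<subseteq> L \<or> L \<subseteq> K" by auto
  then consider "K \<inter> L = {}" | "K \<subseteq> L" | "L \<subseteq> K" by blast
  then show "L \<in> (Pow (U - K) - {{}}) \<union> ((\<union>) K ` Pow (U - K) - {K}) \<union> (Pow K - {{}, K})"
  proof cases
    case 2
    then have "L = K \<union> (L - K)" "L - K \<in> Pow (U - K)" using L by auto
    then show ?thesis using L by blast
  qed (use L in auto)
next
  fix L assume "L \<in> (Pow (U - K) - {{}}) \<union> ((\<union>) K ` Pow (U - K) - {K}) \<union> (Pow K - {{}, K})"
  then show "L \<in> {L. L \<subseteq> U \<and> L \<noteq> {} \<and> L \<noteq> K \<and> (K \<inter> L = {} \<or> K \<subseteq> L \<or> L \<subseteq> K)}"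
    using assms by auto
qed

lemma card_disjoint_or_comparable_subsets:
  assumes U: "finite U" and K: "K \<subseteq> U" "K \<noteq> {}"
  shows "card {L. L \<subseteq> U \<and> L \<noteq> {} \<and> L \<noteq> K \<and> (K \<inter> L = {} \<or> K \<subseteq> L \<or> L \<subseteq> K)} + 4
       = 2 * 2 ^ card (U - K) + 2 ^ card K"
proof -
  let ?m = "card (U - K)"
  have "finite K" using U K(1) by (rule finite_subset[rotated])
  have "card (Pow (U - K) - {{}}) = 2 ^ ?m - 1" using U by (simp add: card_Pow)
  moreover have "card ((\<union>) K ` Pow (U - K) - {K}) = 2 ^ ?m - 1"
  proof -
    have "inj_on ((\<union>) K) (Pow (U - K))" by (auto simp: inj_on_def)
    moreover have "K \<in> (\<union>) K ` Pow (U - K)" by (rule image_eqI[of _ _ "{}"]) auto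
    ultimately show ?thesis using U by (simp add: card_image card_Pow)
  qed
  moreover have "card (Pow K - {{}, K}) = 2 ^ card K - 2"
    using \<open>finite K\<close> K(2) by (simp add: card_Diff_subset card_Pow)
  moreover have "card ((Pow (U - K) - {{}}) \<union> ((\<union>) K ` Pow (U - K) - {K}) \<union> (Pow K - {{}, K}))
      = card (Pow (U - K) - {{}}) + card ((\<union>) K ` Pow (U - K) - {K}) + card (Pow K - {{}, K})"
  proof -
    have "(Pow (U - K) - {{}}) \<inter> ((\<union>) K ` Pow (U - K) - {K}) = {}" using K(2) by auto
    moreover have "((Pow (U - K) - {{}}) \<union> ((\<union>) K ` Pow (U - K) - {K})) \<inter> (Pow K - {{}, K}) = {}"
      by auto
    ultimately show ?thesis using U \<open>finite K\<close> by (simp add: card_Un_disjoint)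
  qed
  moreover have "(2::nat) \<le> 2 ^ card K"
    using power_increasing[of 1 "card K" "2::nat"] \<open>finite K\<close> K(2) by (simp add: Suc_le_eq card_gt_0_iff)
  moreover have "(1::nat) \<le> 2 ^ ?m" by simp
  ultimately show ?thesis unfolding disjoint_or_comparable_subsets_eq[OF K(1)] by linarith
qed

lemma card_noncrossing_partners:
  fixes K :: "'n::finite set"
  assumes i0: "i0 \<notin> K" and K: "K \<noteq> {}"
  shows "card {L. i0 \<notin> L \<and> L \<noteq> {} \<and> L \<noteq> K \<and> noncrossing K L} + 4
       = 2 ^ (CARD('n) - card K) + 2 ^ card K"
proof -
  have "{L. i0 \<notin> L \<and> L \<noteq> {} \<and> L \<noteq> K \<and> noncrossing K L}
      = {L. L \<subseteq> - {i0} \<and> L \<noteq> {} \<and> L \<noteq> K \<and> (K \<inter> L = {} \<or> K \<subseteq> L \<or> L \<subseteq> K)}"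
    using i0 by (auto simp: noncrossing_def)
  moreover have "K \<subseteq> - {i0}" using i0 by auto
  moreover have "CARD('n) - card K = Suc (card (- {i0} - K))"
  proof -
    have "- {i0} - K = - insert i0 K" by auto
    then have "card (- {i0} - K) = CARD('n) - Suc (card K)" using i0 by (simp add: card_Compl_eq)
    moreover have "card (insert i0 K) \<le> CARD('n)" by (rule card_mono) auto
    ultimately show ?thesis using i0 by simp
  qed
  ultimately show ?thesis using card_disjoint_or_comparable_subsets[of "- {i0}" K] K by simp
qed

definition triangle_degree :: "real^'n^'n \<Rightarrow> nat" where
  "triangle_degree X = card {Y \<in> range cut_matrix. triangle_rel X Y}"

lemma triangle_degree_cut_matrix:
  fixes K :: "'n::finite set"
  assumes K: "K \<noteq> {}" "K \<noteq> UNIV"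
  shows "triangle_degree (cut_matrix K) + 4 = 2 ^ (CARD('n) - card K) + 2 ^ card K"
proof -
  obtain i0 where i0: "i0 \<notin> K" using K(2) by blast
  let ?T = "{L. i0 \<notin> L \<and> L \<noteq> {} \<and> L \<noteq> K \<and> noncrossing K L}"
  have "{Y \<in> range cut_matrix. triangle_rel (cut_matrix K) Y} = cut_matrix ` ?T"
  proof (intro set_eqI iffI)
    fix Y assume "Y \<in> {Y \<in> range cut_matrix. triangle_rel (cut_matrix K) Y}"
    then obtain L where Y: "Y = cut_matrix L" and rel: "triangle_rel (cut_matrix K) Y" by auto
    define L' where "L' = (if i0 \<in> L then - L else L)"
    have Y': "Y = cut_matrix L'" unfolding Y L'_def by (simp add: cut_matrix_Compl)
    then have "noncrossing K L'" using rel triangle_rel_imp_noncrossing by simp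
    moreover have "L' \<noteq> {}" "L' \<noteq> K"
      using rel Y' by (auto simp: triangle_rel_def ones_matrix_eq_cut_matrix_empty)
    ultimately show "Y \<in> cut_matrix ` ?T" using Y' by (auto simp: L'_def)
  next
    fix Y assume "Y \<in> cut_matrix ` ?T"
    then obtain L where Y: "Y = cut_matrix L" and L: "L \<in> ?T" by blast
    then have "triangle_rel (cut_matrix K) (cut_matrix L)"
      using i0 K by (intro noncrossing_imp_triangle_rel) auto
    then show "Y \<in> {Y \<in> range cut_matrix. triangle_rel (cut_matrix K) Y}" using Y by simp
  qed
  moreover have "inj_on cut_matrix ?T"
    by (auto simp: inj_on_def cut_matrix_eq_iff)
  ultimately have "triangle_degree (cut_matrix K) = card ?T"
    by (simp add: triangle_degree_def card_image)
  then show ?thesis using card_noncrossing_partners[OF i0 K(1)] by simp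
qed

lemma triangle_degree_image_le:
  fixes \<tau> :: "real^'n^'n \<Rightarrow> real^'n^'n"
  assumes bij: "bij_betw \<tau> elliptope elliptope" and aff: "affine_on elliptope \<tau>"
    and fix_ones: "\<tau> ones_matrix = ones_matrix" and X: "X \<in> range cut_matrix"
  shows "triangle_degree X \<le> triangle_degree (\<tau> X)"
  unfolding triangle_degree_def
proof (rule card_inj_on_le)
  show "inj_on \<tau> {Y \<in> range cut_matrix. triangle_rel X Y}"
    by (rule inj_on_subset[of _ elliptope]) (use bij cut_matrix_in_elliptope in \<open>auto simp: bij_betw_def\<close>)
  show "\<tau> ` {Y \<in> range cut_matrix. triangle_rel X Y} \<subseteq> {Y \<in> range cut_matrix. triangle_rel (\<tau> X) Y}"
    using affine_bij_cut_matrix[OF bij aff] triangle_rel_image[OF bij aff fix_ones X] by auto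
qed simp

lemma affine_bij_inv_into:
  fixes \<tau> :: "real^'n^'n \<Rightarrow> real^'n^'n"
  assumes bij: "bij_betw \<tau> elliptope elliptope" and aff: "affine_on elliptope \<tau>"
    and fix_ones: "\<tau> ones_matrix = ones_matrix"
  shows "bij_betw (inv_into elliptope \<tau>) elliptope elliptope"
    and "affine_on elliptope (inv_into elliptope \<tau>)"
    and "inv_into elliptope \<tau> ones_matrix = ones_matrix"
  using bij_betw_inv_into[OF bij] affine_on_inv_into[OF bij aff convex_elliptope]
    inv_into_f_f[of \<tau> elliptope ones_matrix] bij fix_ones ones_matrix_in_elliptope
  by (auto simp: bij_betw_def)

lemma triangle_degree_image:
  fixes \<tau> :: "real^'n^'n \<Rightarrow> real^'n^'n"
  assumes bij: "bij_betw \<tau> elliptope elliptope" and aff: "affine_on elliptope \<tau>"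
    and fix_ones: "\<tau> ones_matrix = ones_matrix" and X: "X \<in> range cut_matrix"
  shows "triangle_degree (\<tau> X) = triangle_degree X"
proof -
  obtain K where K: "X = cut_matrix K" using X by blast
  then have "\<tau> X \<in> range cut_matrix" using affine_bij_cut_matrix[OF bij aff] by blast
  from triangle_degree_image_le[OF affine_bij_inv_into[OF bij aff fix_ones] this]
  have "triangle_degree (\<tau> X) \<le> triangle_degree X"
    using inv_into_f_f[OF bij_betw_imp_inj_on[OF bij] cut_matrix_in_elliptope] K by simp
  then show ?thesis using triangle_degree_image_le[OF bij aff fix_ones X] by simp
qed

lemma pow2_sum_strict_mono:
  fixes a b N :: nat
  assumes "a < b" and "2 * b \<le> N"
  shows "2 ^ (N - b) + 2 ^ b < (2::nat) ^ (N - a) + 2 ^ a"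
proof -
  define P :: nat where "P = 2 ^ a"
  define Q :: nat where "Q = 2 ^ (N - b)"
  define D :: nat where "D = 2 ^ (b - a)"
  have "P < Q" unfolding P_def Q_def using assms by (intro power_strict_increasing) auto
  have "2 \<le> D" unfolding D_def using power_increasing[of 1 "b - a" "2::nat"] assms by simp
  have "2 ^ b = P * D" "2 ^ (N - a) = Q * D"
    unfolding P_def Q_def D_def using assms by (simp_all flip: power_add)
  moreover have "(Q - P) * 2 \<le> (Q - P) * D" using \<open>2 \<le> D\<close> by simp
  moreover have "Q * D = P * D + (Q - P) * D" using \<open>P < Q\<close> by (simp add: diff_mult_distrib)
  ultimately show ?thesis using \<open>P < Q\<close> unfolding P_def Q_def by linarith
qed

lemma pow2_sum_eq_imp:
  fixes a b N :: nat
  assumes eq: "2 ^ (N - b) + 2 ^ b = (2::nat) ^ (N - a) + 2 ^ a" and "2 * a \<le> N" and "b \<le> N"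
  shows "b = a \<or> N - b = a"
proof -
  define l where "l = min b (N - b)"
  have "2 ^ (N - l) + 2 ^ l = (2::nat) ^ (N - a) + 2 ^ a"
    using eq \<open>b \<le> N\<close> by (auto simp: l_def min_def add.commute)
  moreover have "2 * l \<le> N" by (simp add: l_def)
  ultimately have "l = a"
    using pow2_sum_strict_mono[of l a N] pow2_sum_strict_mono[of a l N] \<open>2 * a \<le> N\<close>
    by (metis linorder_neqE_nat less_irrefl)
  then show ?thesis unfolding l_def min_def by (auto split: if_splits)
qed

text \<open>The cut classes are told apart by the degree \<open>2\<^sup>N\<^sup>-\<^sup>k + 2\<^sup>k - 4\<close>, which is injective on
  \<open>k \<le> N/2\<close> and is preserved by \<open>\<tau>\<close>.\<close>
lemma affine_bij_cut_class:
  fixes \<tau> :: "real^'n^'n \<Rightarrow> real^'n^'n"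
  assumes bij: "bij_betw \<tau> elliptope elliptope" and aff: "affine_on elliptope \<tau>"
    and fix_ones: "\<tau> ones_matrix = ones_matrix"
    and k: "1 \<le> k" "k \<le> CARD('n) div 2" and X: "X \<in> cut_class k"
  shows "\<tau> X \<in> cut_class k"
proof -
  obtain K where X_eq: "X = cut_matrix K" and card_K: "card K = k"
    using X by (auto simp: cut_class_def)
  have "K \<noteq> {}" using card_K k by auto
  have "K \<noteq> UNIV"
  proof
    assume "K = UNIV"
    then have "CARD('n) \<le> CARD('n) div 2" using card_K k by simp
    moreover have "CARD('n) div 2 < CARD('n)" by simp
    ultimately show False by linarith
  qed
  obtain L where L: "\<tau> X = cut_matrix L"
    using affine_bij_cut_matrix[OF bij aff] X_eq by blast
  have "L \<noteq> {} \<and> L \<noteq> UNIV"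
  proof (rule ccontr)
    assume "\<not> (L \<noteq> {} \<and> L \<noteq> UNIV)"
    then have "\<tau> X = \<tau> ones_matrix"
      using L fix_ones cut_matrix_Compl[of "{}"] by (auto simp: ones_matrix_eq_cut_matrix_empty)
    then have "cut_matrix K = cut_matrix {}"
      using bij X_eq cut_matrix_in_elliptope ones_matrix_in_elliptope
      by (auto simp: bij_betw_def inj_on_def ones_matrix_eq_cut_matrix_empty)
    then show False using \<open>K \<noteq> {}\<close> \<open>K \<noteq> UNIV\<close> by (auto simp: cut_matrix_eq_iff)
  qed
  then have "2 ^ (CARD('n) - card L) + 2 ^ card L = (2::nat) ^ (CARD('n) - k) + 2 ^ k"
    using triangle_degree_image[OF bij aff fix_ones] triangle_degree_cut_matrix \<open>K \<noteq> {}\<close> \<open>K \<noteq> UNIV\<close>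
      X_eq L card_K by (metis add_right_cancel rangeI)
  then have "card L = k \<or> card (- L) = k"
    using pow2_sum_eq_imp[of _ "card L"] k card_mono[of UNIV L] by (simp add: card_Compl_eq)
  moreover have "\<tau> X = cut_matrix (- L)" by (simp only: L cut_matrix_Compl)
  ultimately show ?thesis using L unfolding cut_class_def by blast
qed

theorem lemma11:
  fixes \<sigma> :: "real^'n^'n \<Rightarrow> real^'n^'n"
  assumes "bij_betw \<sigma> elliptope elliptope"
    and "affine_on elliptope \<sigma>"
    and "\<sigma> ones_matrix = ones_matrix"
    and "1 \<le> k" and "k \<le> CARD('n) div 2"
  shows "\<sigma> ` cut_class k = cut_class k"
proof
  show "\<sigma> ` cut_class k \<subseteq> cut_class k"
    using affine_bij_cut_class[OF assms] by blast
  show "cut_class k \<subseteq> \<sigma> ` cut_class k"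
  proof
    fix X :: "real^'n^'n" assume X: "X \<in> cut_class k"
    then have "X \<in> elliptope" using cut_matrix_in_elliptope by (auto simp: cut_class_def)
    then have "X = \<sigma> (inv_into elliptope \<sigma> X)"
      using assms(1) by (simp add: bij_betw_def f_inv_into_f)
    moreover have "inv_into elliptope \<sigma> X \<in> cut_class k"
      by (rule affine_bij_cut_class[OF affine_bij_inv_into[OF assms(1-3)] assms(4,5) X])
    ultimately show "X \<in> \<sigma> ` cut_class k" by blast
  qed
qed

end
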